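(* Let $m\geq 0$ and $k\geq 1$ be integers and let $n$ be a nonnegative integer with $n\geq t(m,k)$, where \[ t(m,k)= m\left(\left\lfloor \frac{m}{k}\right\rfloor +1\right)k-\binom{\lfloor m/k\rfloor +1}{2}k^2 . \] Then $b(n,k)\geq m$.
   Context: For a cell $u$ of the Young diagram of a partition $\lambda$, the hook length of $u$ is the number of cells $v$ of the diagram with $v=u$, or $v$ below $u$ in the same column, or $v$ to the right of $u$ in the same row. $\alpha_k(\lambda)$ is the number of cells of the Young diagram of $\lambda$ with hook length exactly $k$. $P(n)$ is the set of partitions of $n$ (with $P(0)$ containing only the empty partition), and $b(n,k)=\max\{\alpha_k(\lambda)\colon\lambda\in P(n)\}$. *)

theory Defs
  imports Main
begin

definition partitions :: "nat \<Rightarrow> nat list set" where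
  "partitions n = {lam. sorted_wrt (\<ge>) lam \<and> 0 \<notin> set lam \<and> sum_list lam = n}"

definition young_cells :: "nat list \<Rightarrow> (nat \<times> nat) set" where
  "young_cells lam = {(i, j). i < length lam \<and> j < lam ! i}"

definition hook_length :: "nat list \<Rightarrow> nat \<times> nat \<Rightarrow> nat" where
  "hook_length lam u = card {v \<in> young_cells lam.
      v = u \<or> (snd v = snd u \<and> fst v > fst u) \<or> (fst v = fst u \<and> snd v > snd u)}"

definition alpha :: "nat \<Rightarrow> nat list \<Rightarrow> nat" where
  "alpha k lam = card {u \<in> young_cells lam. hook_length lam u = k}"

definition b :: "nat \<Rightarrow> nat \<Rightarrow> nat" where
  "b n k = Max (alpha k ` partitions n)"

definition t :: "nat \<Rightarrow> nat \<Rightarrow> int" where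
  "t m k = int m * (int (m div k) + 1) * int k - int ((m div k + 1) choose 2) * int k ^ 2"

end

theory Submission
  imports Defs
begin

text \<open>Write m = q k + r with 1 \<le> r \<le> k. In a block of at most k rows of nearly equal
  length sitting on rows shorter by at least k, every row has a cell of hook length k. The
  staircase of q blocks of k rows of lengths k, 2k, ..., qk therefore has q k such cells and
  size k^2 (q+1 choose 2); a further block of r rows of length (q+1)k brings the count to m and
  the size to t(m,k). A surplus d = n - t(m,k) is absorbed by lengthening the top block: evenly
  if it has fewer than k rows or d is divisible by r, into the first row alone if d \<ge> k. In the
  remaining case r = k, 0 < d < k, every block of the staircase is shifted by d cells.\<close>

definition col_length :: "nat list \<Rightarrow> nat \<Rightarrow> nat" where
  "col_length lam j = length (takeWhile (\<lambda>x. j < x) lam)"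

lemma col_length_Nil [simp]: "col_length [] j = 0"
  by (simp add: col_length_def)

lemma col_length_Cons [simp]: "col_length (x # xs) j = (if j < x then Suc (col_length xs j) else 0)"
  by (simp add: col_length_def)

lemma col_length_replicate [simp]: "col_length (replicate n x) j = (if j < x then n else 0)"
  by (induction n) auto

lemma col_length_append:
  "col_length (xs @ ys) j = (if \<forall>x\<in>set xs. j < x then length xs + col_length ys j else col_length xs j)"
  by (induction xs) auto

lemma col_length_eq_0: "\<forall>y\<in>set xs. y \<le> j \<Longrightarrow> col_length xs j = 0"
  by (cases xs) auto

lemma less_col_length_iff:
  assumes "sorted_wrt (\<ge>) lam"
  shows "i < col_length lam j \<longleftrightarrow> i < length lam \<and> j < lam ! i"
  using assms
proof (induction lam arbitrary: i)
  case Nil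
  then show ?case by simp
next
  case (Cons x xs)
  show ?case
  proof (cases "j < x")
    case True
    then show ?thesis using Cons by (cases i) auto
  next
    case False
    with Cons.prems have "\<not> j < (x # xs) ! i" if "i < length (x # xs)" for i
      using that by (cases i) (auto dest!: nth_mem)
    with False show ?thesis by auto
  qed
qed

lemma hook_length_eq:
  assumes lam: "sorted_wrt (\<ge>) lam" and i: "i < length lam" and j: "j < lam ! i"
  shows "hook_length lam (i, j) + i + j + 1 = lam ! i + col_length lam j"
proof -
  have col: "i < col_length lam j" using less_col_length_iff[OF lam] i j by simp
  let ?arm = "(\<lambda>c. (i, c)) ` {j<..<lam ! i}"
  let ?leg = "(\<lambda>a. (a, j)) ` {i<..<col_length lam j}"
  have "{v \<in> young_cells lam. v = (i, j) \<or> (snd v = snd (i, j) \<and> fst v > fst (i, j))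
          \<or> (fst v = fst (i, j) \<and> snd v > snd (i, j))} = insert (i, j) (?arm \<union> ?leg)"
    using less_col_length_iff[OF lam] i j by (auto simp: young_cells_def)
  moreover have "card (insert (i, j) (?arm \<union> ?leg)) = Suc (card ?arm + card ?leg)"
    by (subst card_insert_disjoint) (auto intro: card_Un_disjoint)
  moreover have "card ?arm = lam ! i - j - 1" "card ?leg = col_length lam j - i - 1"
    by (simp_all add: card_image inj_on_def)
  ultimately show ?thesis
    using col j unfolding hook_length_def by simp
qed

lemma finite_young_cells: "finite (young_cells lam)"
proof (rule finite_subset)
  show "young_cells lam \<subseteq> {..<length lam} \<times> {..sum_list lam}"
    using elem_le_sum_list by (fastforce simp: young_cells_def)
qed simp

lemma hook_length_append:
  assumes sorted: "sorted_wrt (\<ge>) (B @ lam)" and cell: "(i, j) \<in> young_cells lam"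
  shows "hook_length (B @ lam) (i + length B, j) = hook_length lam (i, j)"
proof -
  have i: "i < length lam" and j: "j < lam ! i" using cell by (auto simp: young_cells_def)
  have "\<forall>x\<in>set B. j < x"
    using sorted i j by (fastforce simp: sorted_wrt_append dest: nth_mem)
  then have "col_length (B @ lam) j = length B + col_length lam j"
    by (simp add: col_length_append)
  then show ?thesis
    using hook_length_eq[OF sorted, of "i + length B" j] hook_length_eq[of lam i j] sorted i j
    by (simp add: nth_append sorted_wrt_append)
qed

lemma alpha_append_ge:
  assumes sorted: "sorted_wrt (\<ge>) (B @ lam)"
    and cells: "\<forall>i<length B. g i < B ! i \<and> hook_length (B @ lam) (i, g i) = k"
  shows "length B + alpha k lam \<le> alpha k (B @ lam)"
proof -
  let ?hooks = "\<lambda>lam. {u \<in> young_cells lam. hook_length lam u = k}"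
  let ?top = "(\<lambda>i. (i, g i)) ` {..<length B}"
  let ?shifted = "(\<lambda>(i, j). (i + length B, j)) ` ?hooks lam"
  have "?top \<union> ?shifted \<subseteq> ?hooks (B @ lam)"
    using cells hook_length_append[OF sorted]
    by (fastforce simp: young_cells_def nth_append)
  moreover have "card (?top \<union> ?shifted) = length B + card (?hooks lam)"
    using finite_young_cells[of lam]
    by (subst card_Un_disjoint) (auto simp: card_image inj_on_def)
  ultimately show ?thesis
    unfolding alpha_def using finite_young_cells[of "B @ lam"]
    by (metis (no_types, lifting) card_mono finite_subset mem_Collect_eq subsetI)
qed

lemma sorted_wrt_ge_replicate [simp]: "sorted_wrt (\<ge>) (replicate n (x :: nat))"
  by (induction n) auto

text \<open>In row i of the block (of h rows) take the cell whose arm has length k + i + 1 - h; the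
  spread condition makes its leg reach exactly the bottom of the block.\<close>
lemma alpha_append_flat_block:
  assumes sorted: "sorted_wrt (\<ge>) B" "sorted_wrt (\<ge>) lam"
    and height: "length B \<le> k"
    and spread: "\<forall>x\<in>set B. \<forall>z\<in>set B. x \<le> z + (k - length B)"
    and wide: "\<forall>x\<in>set B. k \<le> x"
    and below: "\<forall>x\<in>set B. \<forall>y\<in>set lam. y + k \<le> x"
  shows "length B + alpha k lam \<le> alpha k (B @ lam)"
proof (rule alpha_append_ge)
  let ?h = "length B"
  show sorted_all: "sorted_wrt (\<ge>) (B @ lam)"
    using sorted below by (fastforce simp: sorted_wrt_append)
  define g where "g i = B ! i + ?h - i - 1 - k" for i
  show "\<forall>i<?h. g i < B ! i \<and> hook_length (B @ lam) (i, g i) = k"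
  proof (intro allI impI)
    fix i assume i: "i < ?h"
    have x: "B ! i \<in> set B" using i by simp
    have "\<forall>z\<in>set B. g i < z"
      using spread x wide height i unfolding g_def by fastforce
    moreover have "\<forall>y\<in>set lam. y \<le> g i"
      using below x i unfolding g_def by fastforce
    ultimately have "col_length (B @ lam) (g i) = ?h"
      by (simp add: col_length_append col_length_eq_0)
    moreover have "g i < B ! i" using wide x height i unfolding g_def by fastforce
    ultimately show "g i < B ! i \<and> hook_length (B @ lam) (i, g i) = k"
      using hook_length_eq[OF sorted_all, of i "g i"] i wide x unfolding g_def
      by (fastforce simp: nth_append)
  qed
qed

corollary alpha_append_replicate:
  assumes "h \<le> k" "k \<le> W" "\<forall>y\<in>set lam. y + k \<le> W" "sorted_wrt (\<ge>) lam"
  shows "h + alpha k lam \<le> alpha k (replicate h W @ lam)"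
proof -
  have "length (replicate h W) + alpha k lam \<le> alpha k (replicate h W @ lam)"
    by (rule alpha_append_flat_block) (use assms in auto)
  then show ?thesis by simp
qed

definition shifted_block :: "nat \<Rightarrow> nat \<Rightarrow> nat \<Rightarrow> nat list" where
  "shifted_block k p W = (W + p) # replicate (k - p - 1) W @ replicate p (W - 1)"

lemma length_shifted_block: "p < k \<Longrightarrow> length (shifted_block k p W) = k"
  by (simp add: shifted_block_def)

lemma sum_list_shifted_block:
  assumes "p < k" "1 \<le> W"
  shows "sum_list (shifted_block k p W) = k * W"
proof -
  define c w where "c = k - p - 1" and "w = W - 1"
  have "k = p + 1 + c" "W = w + 1" using assms unfolding c_def w_def by simp_all
  then show ?thesis by (simp add: shifted_block_def sum_list_replicate algebra_simps)
qed

text \<open>Each of the k rows of the shifted block has a hook of length k in column W - 1 - i;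
  the last p rows are one cell short, and this is compensated by the head row W - k + p of the
  partition below, which reaches into exactly their columns.\<close>
lemma alpha_append_shifted_block:
  assumes p: "1 \<le> p" "p < k" and W: "k \<le> W"
    and rest: "sorted_wrt (\<ge>) rest" "\<forall>y\<in>set rest. y + k \<le> W"
  shows "k + alpha k ((W - k + p) # rest) \<le> alpha k (shifted_block k p W @ (W - k + p) # rest)"
proof -
  let ?B = "shifted_block k p W"
  let ?L = "?B @ (W - k + p) # rest"
  have sorted: "sorted_wrt (\<ge>) ?L"
    using rest W p by (auto simp: sorted_wrt_append shifted_block_def)
  have "\<forall>i<length ?B. W - 1 - i < ?B ! i \<and> hook_length ?L (i, W - 1 - i) = k"
  proof (intro allI impI)
    fix i assume "i < length ?B"
    then have i: "i < k" using p by (simp add: length_shifted_block)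
    have rest_le: "\<forall>y\<in>set rest. y \<le> W - 1 - i" using rest(2) i W by fastforce
    consider (top) "i = 0" | (mid) "1 \<le> i" "i < k - p" | (low) "k - p \<le> i"
      by linarith
    then have "?B ! i + col_length ?L (W - 1 - i) = k + W \<and> W - 1 - i < ?B ! i"
    proof cases
      case top
      then show ?thesis using p W by (simp add: shifted_block_def col_length_append)
    next
      case mid
      then have "?B ! i = W" by (cases i) (auto simp: shifted_block_def nth_append)
      then show ?thesis using mid p W by (simp add: shifted_block_def col_length_append) linarith
    next
      case low
      then have "?B ! i = W - 1" using i p by (auto simp: shifted_block_def nth_append)
      then show ?thesis using low i p W rest_le
        by (simp add: shifted_block_def col_length_append col_length_eq_0) linarith
    qed
    then show "W - 1 - i < ?B ! i \<and> hook_length ?L (i, W - 1 - i) = k"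
      using hook_length_eq[OF sorted, of i "W - 1 - i"] i p W
      by (simp add: nth_append length_shifted_block)
  qed
  from alpha_append_ge[OF sorted this] show ?thesis
    using p by (simp add: length_shifted_block)
qed

fun staircase :: "nat \<Rightarrow> nat \<Rightarrow> nat list" where
  "staircase k 0 = []"
| "staircase k (Suc s) = replicate k (Suc s * k) @ staircase k s"

lemma staircase_le: "\<forall>y\<in>set (staircase k s). y \<le> s * k"
  by (induction s) auto

lemma staircase_pos: "0 \<notin> set (staircase k s)"
  by (induction s) auto

lemma sorted_staircase: "sorted_wrt (\<ge>) (staircase k s)"
proof (induction s)
  case (Suc s)
  then show ?case using staircase_le[of k s] by (auto simp: sorted_wrt_append)
qed simp

lemma Suc_choose_two: "Suc n choose 2 = n + (n choose 2)"
  by (simp add: numeral_2_eq_2)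

lemma sum_list_staircase: "sum_list (staircase k s) = k ^ 2 * (Suc s choose 2)"
  by (induction s) (simp_all add: Suc_choose_two [of "Suc _"] sum_list_replicate power2_eq_square algebra_simps)

lemma alpha_staircase: "s * k \<le> alpha k (staircase k s)"
proof (induction s)
  case (Suc s)
  have "k + alpha k (staircase k s) \<le> alpha k (replicate k (Suc s * k) @ staircase k s)"
    using staircase_le[of k s] by (intro alpha_append_replicate) (auto simp: sorted_staircase)
  with Suc show ?case by simp
qed simp

fun shifted_staircase :: "nat \<Rightarrow> nat \<Rightarrow> nat \<Rightarrow> nat list" where
  "shifted_staircase k p 0 = [p]"
| "shifted_staircase k p (Suc s) = shifted_block k p (Suc s * k) @ shifted_staircase k p s"

lemma shifted_staircase_shape:
  assumes "1 \<le> p" "p < k"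
  shows "\<exists>rest. shifted_staircase k p s = (s * k + p) # rest \<and> sorted_wrt (\<ge>) rest
    \<and> (\<forall>y\<in>set rest. 0 < y \<and> y \<le> s * k)"
proof (induction s)
  case (Suc s)
  then obtain rest where rest: "shifted_staircase k p s = (s * k + p) # rest" "sorted_wrt (\<ge>) rest"
    "\<forall>y\<in>set rest. 0 < y \<and> y \<le> s * k" by blast
  show ?case
    using rest assms by (fastforce simp: shifted_block_def sorted_wrt_append)
qed simp

lemma sum_list_shifted_staircase:
  assumes "p < k"
  shows "sum_list (shifted_staircase k p s) = k ^ 2 * (Suc s choose 2) + p"
  by (induction s)
    (use assms in \<open>simp_all add: Suc_choose_two [of "Suc _"] sum_list_shifted_block power2_eq_square algebra_simps\<close>)

lemma alpha_shifted_staircase: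
  assumes "1 \<le> p" "p < k"
  shows "s * k \<le> alpha k (shifted_staircase k p s)"
proof (induction s)
  case (Suc s)
  obtain rest where rest: "shifted_staircase k p s = (s * k + p) # rest" "sorted_wrt (\<ge>) rest"
    "\<forall>y\<in>set rest. 0 < y \<and> y \<le> s * k"
    using shifted_staircase_shape[OF assms] by blast
  have "k + alpha k (shifted_staircase k p s) \<le> alpha k (shifted_staircase k p (Suc s))"
    using alpha_append_shifted_block[OF assms, of "Suc s * k" rest] rest assms by auto
  with Suc show ?case by simp
qed simp

lemma finite_partitions: "finite (partitions n)"
proof (rule finite_subset)
  show "partitions n \<subseteq> {xs. set xs \<subseteq> {..n} \<and> length xs \<le> n}"
  proof safe
    fix xs assume xs: "xs \<in> partitions n"
    then show "x \<le> n" if "x \<in> set xs" for x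
      using that elem_le_sum_list by (force simp: partitions_def in_set_conv_nth)
    have "length ys \<le> sum_list ys" if "0 \<notin> set ys" for ys :: "nat list"
      using that by (induction ys) auto
    with xs show "length xs \<le> n" by (auto simp: partitions_def)
  qed
qed (rule finite_lists_length_le, simp)

lemma alpha_le_b: "lam \<in> partitions n \<Longrightarrow> alpha k lam \<le> b n k"
  unfolding b_def using finite_partitions by (intro Max_ge) auto

lemma two_mult_Suc_choose_two: "2 * (Suc n choose 2) = n * Suc n"
  by (induction n) (simp_all add: numeral_2_eq_2)

lemma t_eq:
  assumes "1 \<le> r" "r \<le> k"
  shows "t (q * k + r) k = int (k ^ 2 * (Suc q choose 2) + r * (Suc q * k))"
proof -
  define Q where "Q = (q * k + r) div k"
  have two_C: "k ^ 2 * (q * Suc q) = 2 * (k ^ 2 * (Suc q choose 2))"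
    using two_mult_Suc_choose_two[of q] by simp
  have "(q * k + r) * Suc Q * k = (Suc Q choose 2) * k ^ 2 + (k ^ 2 * (Suc q choose 2) + r * (Suc q * k))"
  proof (cases "r = k")
    case True
    then have "Q = Suc q" using assms unfolding Q_def by simp
    with True show ?thesis
      using two_C Suc_choose_two[of "Suc q"] by (simp add: power2_eq_square algebra_simps)
  next
    case False
    then have "Q = q" using assms unfolding Q_def by simp
    then show ?thesis
      using two_C by (simp add: power2_eq_square algebra_simps)
  qed
  then have "int ((q * k + r) * Suc Q * k) - int ((Suc Q choose 2) * k ^ 2)
      = int (k ^ 2 * (Suc q choose 2) + r * (Suc q * k))"
    by simp
  then show ?thesis unfolding t_def Q_def by (simp add: algebra_simps)
qed

lemma b_ge_flat_top:
  assumes r: "1 \<le> r" "r \<le> k" and spread: "r < k \<or> d mod r = 0"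
  shows "q * k + r \<le> b (k ^ 2 * (Suc q choose 2) + r * (Suc q * k) + d) k"
proof -
  define W where "W = Suc q * k + d div r"
  define p where "p = d mod r"
  define B where "B = replicate p (Suc W) @ replicate (r - p) W"
  have p: "p < r" using r unfolding p_def by simp
  have B: "length B = r" "sorted_wrt (\<ge>) B" "\<forall>x\<in>set B. W \<le> x \<and> x \<le> W + 1"
    using p unfolding B_def by (auto simp: sorted_wrt_append)
  have W: "k \<le> W" "\<forall>y\<in>set (staircase k q). y + k \<le> W"
    using staircase_le[of k q] unfolding W_def by auto
  have B_spread: "\<forall>x\<in>set B. \<forall>z\<in>set B. x \<le> z + (k - length B)"
  proof (cases "r < k")
    case True
    have "x \<le> z + (k - length B)" if "x \<in> set B" "z \<in> set B" for x z
    proof -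
      have "x \<le> W + 1" "W \<le> z" using B(3) that by auto
      then show ?thesis using True B(1) by linarith
    qed
    then show ?thesis by blast
  next
    case False
    then have "B = replicate r W" using spread unfolding B_def p_def by simp
    then show ?thesis by simp
  qed
  have "length B + alpha k (staircase k q) \<le> alpha k (B @ staircase k q)"
    by (intro alpha_append_flat_block B_spread) (use B W r in \<open>fastforce simp: sorted_staircase\<close>)+
  moreover have "B @ staircase k q \<in> partitions (k ^ 2 * (Suc q choose 2) + r * (Suc q * k) + d)"
  proof -
    have "sum_list B = r * W + p" using p by (simp add: B_def sum_list_replicate algebra_simps)
    also have "\<dots> = r * (Suc q * k) + d"
      unfolding W_def p_def by (simp add: algebra_simps)
    finally have "sum_list (B @ staircase k q) = k ^ 2 * (Suc q choose 2) + r * (Suc q * k) + d"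
      by (simp add: sum_list_staircase)
    moreover have "sorted_wrt (\<ge>) (B @ staircase k q)"
      using B W sorted_staircase[of k q] by (fastforce simp: sorted_wrt_append)
    moreover have "0 \<notin> set B" using B W r by fastforce
    ultimately show ?thesis using staircase_pos[of k q] by (simp add: partitions_def)
  qed
  ultimately show ?thesis
    using alpha_staircase[of q k] alpha_le_b[of _ _ k] B(1) by fastforce
qed

lemma b_ge_long_top_row:
  assumes r: "1 \<le> r" "r \<le> k" and d: "k \<le> d"
  shows "q * k + r \<le> b (k ^ 2 * (Suc q choose 2) + r * (Suc q * k) + d) k"
proof -
  define W where "W = Suc q * k"
  define lam where "lam = replicate (r - 1) W @ staircase k q"
  have W: "1 \<le> W" "k \<le> W" "\<forall>y\<in>set (staircase k q). y + k \<le> W"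
    using r staircase_le[of k q] unfolding W_def by auto
  have lam: "sorted_wrt (\<ge>) lam" "\<forall>y\<in>set lam. 0 < y \<and> y \<le> W"
    using W sorted_staircase[of k q] staircase_pos[of k q] unfolding lam_def
    by (auto simp: sorted_wrt_append) (metis add_leD1 neq0_conv)+
  have "r - 1 + alpha k (staircase k q) \<le> alpha k lam"
    using r W unfolding lam_def by (intro alpha_append_replicate) (auto simp: sorted_staircase)
  moreover have "1 + alpha k lam \<le> alpha k (replicate 1 (W + d) @ lam)"
    using lam d r W by (intro alpha_append_replicate) auto
  moreover have "(W + d) # lam \<in> partitions (k ^ 2 * (Suc q choose 2) + r * (Suc q * k) + d)"
  proof -
    have "W + (r - 1) * W = r * W" using r by (cases r) simp_all
    then have "sum_list ((W + d) # lam) = k ^ 2 * (Suc q choose 2) + r * (Suc q * k) + d"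
      by (simp add: lam_def sum_list_replicate sum_list_staircase W_def)
    then show ?thesis using lam W by (auto simp: partitions_def)
  qed
  ultimately show ?thesis
    using alpha_staircase[of q k] alpha_le_b[of _ _ k] r by fastforce
qed

lemma b_ge_shifted_staircase:
  assumes d: "1 \<le> d" "d < k"
  shows "s * k \<le> b (k ^ 2 * (Suc s choose 2) + d) k"
proof -
  obtain rest where rest: "shifted_staircase k d s = (s * k + d) # rest" "sorted_wrt (\<ge>) rest"
    "\<forall>y\<in>set rest. 0 < y \<and> y \<le> s * k"
    using shifted_staircase_shape[OF d] by blast
  then have "shifted_staircase k d s \<in> partitions (k ^ 2 * (Suc s choose 2) + d)"
    using sum_list_shifted_staircase[OF d(2), of s] d by (auto simp: partitions_def)
  from alpha_le_b[OF this, of k] show ?thesis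
    using alpha_shifted_staircase[OF d, of s] by linarith
qed

lemma b_ge_threshold:
  assumes r: "1 \<le> r" "r \<le> k"
  shows "q * k + r \<le> b (k ^ 2 * (Suc q choose 2) + r * (Suc q * k) + d) k"
proof -
  consider (flat) "r < k \<or> d mod r = 0" | (long) "k \<le> d" | (shifted) "r = k" "1 \<le> d" "d < k"
    using r by fastforce
  then show ?thesis
  proof cases
    case flat
    then show ?thesis using r by (rule b_ge_flat_top[rotated 2])
  next
    case long
    then show ?thesis using r by (rule b_ge_long_top_row[rotated 2])
  next
    case shifted
    have "k ^ 2 * (Suc q choose 2) + r * (Suc q * k) = k ^ 2 * (Suc (Suc q) choose 2)"
      using shifted Suc_choose_two[of "Suc q"] by (simp add: power2_eq_square algebra_simps)
    with b_ge_shifted_staircase[of d k "Suc q"] shifted show ?thesis by simp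
  qed
qed

theorem theorem4p2:
  fixes m k n :: nat
  assumes "k \<ge> 1" and "int n \<ge> t m k"
  shows "b n k \<ge> m"
proof (cases "m = 0")
  case False
  obtain q r where m: "m = q * k + r" and r: "1 \<le> r" "r \<le> k"
  proof (cases "m mod k = 0")
    case True
    then have "m = m div k * k" using div_mult_mod_eq[of m k] by simp
    moreover obtain q where "m div k = Suc q" using False calculation by (cases "m div k") auto
    ultimately have "m = q * k + k" by simp
    with that assms(1) show ?thesis by blast
  next
    case False
    then show ?thesis using that[of "m div k" "m mod k"] assms(1) by simp
  qed
  define T where "T = k ^ 2 * (Suc q choose 2) + r * (Suc q * k)"
  have "n = T + (n - T)"
    using assms(2) t_eq[OF r, of q] unfolding m T_def by linarith
  then show ?thesis using b_ge_threshold[OF r, of q "n - T"] m unfolding T_def by metis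
qed simp

end
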